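(* Let $S_X,S_Y$ be finite nonempty action sets, $\varphi:S_X\times S_Y\to\mathbb{R}$ and $\lambda\in[0,1)$. Suppose $\sigma_X:\mathcal{H}\to\Delta(S_X)$ is $(\varphi,\lambda)$-autocratic. Let $\mathcal{H}_Y=\bigcup_{t\ge0}S_Y^t$ (with $S_Y^0=\{\varnothing\}$ the empty history). Then there exists an opponent-conditioned strategy $\widetilde\sigma_X:\mathcal{H}_Y\to\Delta(S_X)$ that is also $(\varphi,\lambda)$-autocratic.
   Context: Two players $X,Y$ play a repeated game with finite action sets $S_X,S_Y$; $\Delta(S)$ denotes the probability distributions on $S$. Histories: $\mathcal{H}=\bigcup_{T\ge0}(S_X\times S_Y)^T$; behavioral strategies are maps $\sigma:\mathcal{H}\to\Delta(S)$; players independently draw actions each round from their strategies evaluated at the history of realized action pairs of previous rounds, with $\mathbb{E}_{\sigma_X,\sigma_Y}$ the expectation over the resulting play. An opponent-conditioned strategy $\widetilde\sigma_X:\mathcal{H}_Y\to\Delta(S_X)$ is the behavioral strategy that in round $t$ plays $\widetilde\sigma_X[s_Y^0,\dots,s_Y^{t-1}]$, where $s_Y^0,\dots,s_Y^{t-1}$ are $Y$'s realized past actions. A strategy $\sigma_X$ is $(\varphi,\lambda)$-autocratic if for every behavioral strategy $\sigma_Y$ of $Y$, $\mathbb{E}_{\sigma_X,\sigma_Y}\big[(1-\lambda)\sum_{t\ge0}\lambda^t\varphi(s_X^t,s_Y^t)\big]=0$. *)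

theory Defs
  imports "HOL-Probability.Probability"
begin

text \<open>Action sets are finite types 'x, 'y (nonempty automatically). A history is a list of
 realized action pairs, element i being round i. Delta(S) is rendered as 'a pmf.\<close>

type_synonym ('x,'y) bstrat_X = "('x \<times> 'y) list \<Rightarrow> 'x pmf"
type_synonym ('x,'y) bstrat_Y = "('x \<times> 'y) list \<Rightarrow> 'y pmf"

definition hist_prob :: "(('x \<times> 'y) list \<Rightarrow> 'x pmf) \<Rightarrow> (('x \<times> 'y) list \<Rightarrow> 'y pmf)
    \<Rightarrow> ('x \<times> 'y) list \<Rightarrow> real" where
  "hist_prob sX sY h =
     (\<Prod>t<length h. pmf (sX (take t h)) (fst (h ! t)) * pmf (sY (take t h)) (snd (h ! t)))"

definition stage_exp :: "('x::finite \<times> 'y::finite \<Rightarrow> real) \<Rightarrow> (('x \<times> 'y) list \<Rightarrow> 'x pmf)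
    \<Rightarrow> (('x \<times> 'y) list \<Rightarrow> 'y pmf) \<Rightarrow> nat \<Rightarrow> real" where
  "stage_exp phi sX sY t =
     (\<Sum>h \<in> {h :: ('x \<times> 'y) list. length h = Suc t}. hist_prob sX sY h * phi (last h))"

text \<open>Expected normalized discounted payoff
  E[(1-lambda) sum_t lambda^t phi(s^t)] = (1-lambda) sum_t lambda^t E[phi(s^t)].\<close>
definition disc_payoff :: "('x::finite \<times> 'y::finite \<Rightarrow> real) \<Rightarrow> real \<Rightarrow> (('x \<times> 'y) list \<Rightarrow> 'x pmf)
    \<Rightarrow> (('x \<times> 'y) list \<Rightarrow> 'y pmf) \<Rightarrow> real" where
  "disc_payoff phi lam sX sY = (1 - lam) * (\<Sum>t. lam ^ t * stage_exp phi sX sY t)"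

definition autocratic :: "('x::finite \<times> 'y::finite \<Rightarrow> real) \<Rightarrow> real \<Rightarrow> (('x \<times> 'y) list \<Rightarrow> 'x pmf) \<Rightarrow> bool" where
  "autocratic phi lam sX \<longleftrightarrow> (\<forall>sY :: ('x \<times> 'y) list \<Rightarrow> 'y pmf. disc_payoff phi lam sX sY = 0)"

definition opp_cond :: "('y list \<Rightarrow> 'x pmf) \<Rightarrow> ('x \<times> 'y) list \<Rightarrow> 'x pmf" where
  "opp_cond s h = s (map snd h)"

end

(* Let sigma~[zs] = opp_cond_of sX zs be the law of X's action in round |zs| when sigma_X faces
   the pure sequence zs of Y-actions. Against a pure sequence sigma_X and sigma~ yield the same
   stage payoffs, so by autocracy of sigma_X each discounted partial sum along a pure sequence of
   length T equals minus a tail of the series and is at most M lam^T / (1 - lam) in absolute value,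
   M = sum |phi|. Against an arbitrary sigma_Y, X's action under sigma~ depends only on Y's past
   actions and is therefore independent of Y's simultaneous action; hence the T-th discounted
   partial sum of sigma~ against sigma_Y is an average of such pure partial sums over Y's realized
   sequences, and it tends to 0. *)

theory Submission
  imports Defs
begin

lemma sum_lists_length_Suc:
  "(\<Sum>h\<in>{h::'a::finite list. length h = Suc n}. f h) = (\<Sum>h\<in>{h. length h = n}. \<Sum>a\<in>UNIV. f (h @ [a]))"
proof -
  have lists_eq: "{h::'a list. length h = Suc n} = (\<lambda>(h, a). h @ [a]) ` ({h. length h = n} \<times> UNIV)"
  proof (intro set_eqI iffI)
    fix h :: "'a list" assume "h \<in> {h. length h = Suc n}"
    then have "h = butlast h @ [last h]" "length (butlast h) = n"
      by (auto intro: append_butlast_last_id[symmetric])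
    then show "h \<in> (\<lambda>(h, a). h @ [a]) ` ({h. length h = n} \<times> UNIV)"
      by (auto intro!: image_eqI[where x = "(butlast h, last h)"])
  qed auto
  have inj: "inj_on (\<lambda>(h, a). h @ [a]) ({h::'a list. length h = n} \<times> UNIV)"
    by (auto simp: inj_on_def)
  show ?thesis
    unfolding lists_eq sum.reindex[OF inj] by (simp add: sum.cartesian_product case_prod_beta)
qed

lemma sum_UNIV_pair:
  "(\<Sum>a\<in>UNIV. f a) = (\<Sum>x\<in>UNIV. \<Sum>y\<in>(UNIV::'y::finite set). f (x::'x::finite, y))"
  by (simp add: UNIV_Times_UNIV[symmetric] sum.cartesian_product del: UNIV_Times_UNIV)

lemma sum_pmf_times_pmf:
  "(\<Sum>x\<in>UNIV. \<Sum>y\<in>UNIV. pmf p x * pmf q y * f x y)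
   = (\<Sum>y\<in>UNIV. pmf q y * (\<Sum>x\<in>(UNIV::'x::finite set). pmf p x * f x y))"
  by (subst sum.swap) (simp add: sum_distrib_left mult_ac)

lemma sum_pmf_times_pmf_snd:
  "(\<Sum>x\<in>(UNIV::'x::finite set). \<Sum>y\<in>UNIV. pmf p x * pmf q y * g y) = (\<Sum>y\<in>UNIV. pmf q y * g y)"
  by (simp add: sum_pmf_times_pmf sum_distrib_right[symmetric] sum_pmf_eq_1)

lemma hist_prob_Nil [simp]: "hist_prob sX sY [] = 1"
  by (simp add: hist_prob_def)

lemma hist_prob_snoc:
  "hist_prob sX sY (h @ [(x, y)]) = hist_prob sX sY h * pmf (sX h) x * pmf (sY h) y"
proof -
  have "hist_prob sX sY (h @ [(x, y)])
      = (\<Prod>t<length h. pmf (sX (take t (h @ [(x, y)]))) (fst ((h @ [(x, y)]) ! t))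
                     * pmf (sY (take t (h @ [(x, y)]))) (snd ((h @ [(x, y)]) ! t)))
        * (pmf (sX h) x * pmf (sY h) y)"
    by (simp add: hist_prob_def prod.lessThan_Suc)
  also have "(\<Prod>t<length h. pmf (sX (take t (h @ [(x, y)]))) (fst ((h @ [(x, y)]) ! t))
                     * pmf (sY (take t (h @ [(x, y)]))) (snd ((h @ [(x, y)]) ! t)))
           = hist_prob sX sY h"
    unfolding hist_prob_def by (rule prod.cong) (auto simp: nth_append)
  finally show ?thesis by (simp add: mult.assoc)
qed

lemma hist_prob_nonneg: "0 \<le> hist_prob sX sY h"
  unfolding hist_prob_def by (auto intro!: prod_nonneg)

lemma hist_prob_cong:
  assumes "\<And>t. t < length h \<Longrightarrow> sX (take t h) = sX' (take t h) \<and> sY (take t h) = sY' (take t h)"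
  shows "hist_prob sX sY h = hist_prob sX' sY' h"
  unfolding hist_prob_def using assms by (intro prod.cong) auto

lemma sum_hist_prob_length_Suc:
  "(\<Sum>h\<in>{h::('x::finite \<times> 'y::finite) list. length h = Suc n}. hist_prob sX sY h * f h)
   = (\<Sum>h\<in>{h. length h = n}. hist_prob sX sY h *
        (\<Sum>x\<in>UNIV. \<Sum>y\<in>UNIV. pmf (sX h) x * pmf (sY h) y * f (h @ [(x, y)])))"
  by (simp add: sum_lists_length_Suc sum_UNIV_pair hist_prob_snoc sum_distrib_left mult_ac)

lemma sum_hist_prob_take:
  "(\<Sum>h\<in>{h::('x::finite \<times> 'y::finite) list. length h = n + k}. hist_prob sX sY h * f (take n h))
   = (\<Sum>h\<in>{h. length h = n}. hist_prob sX sY h * f h)"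
proof (induction k)
  case 0
  show ?case by (intro sum.cong) auto
next
  case (Suc k)
  have one_step: "(\<Sum>x\<in>UNIV. \<Sum>y\<in>UNIV. pmf (sX h) x * pmf (sY h) y * f (take n (h @ [(x, y)])))
      = f (take n h)" if "length h = n + k" for h
  proof -
    have "(\<Sum>x\<in>UNIV. \<Sum>y\<in>UNIV. pmf (sX h) x * pmf (sY h) y * f (take n (h @ [(x, y)])))
        = (\<Sum>y\<in>UNIV. pmf (sY h) y * f (take n h))"
      using that sum_pmf_times_pmf_snd[of "sX h" "sY h" "\<lambda>_. f (take n h)"] by simp
    also have "\<dots> = f (take n h)"
      by (simp add: sum_distrib_right[symmetric] sum_pmf_eq_1)
    finally show ?thesis .
  qed
  have "(\<Sum>h\<in>{h. length h = n + Suc k}. hist_prob sX sY h * f (take n h))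
      = (\<Sum>h\<in>{h. length h = n + k}. hist_prob sX sY h * f (take n h))"
    unfolding add_Suc_right sum_hist_prob_length_Suc by (intro sum.cong refl) (simp only: mem_Collect_eq one_step)
  then show ?case using Suc.IH by simp
qed

lemma sum_hist_prob_eq_1:
  "(\<Sum>h\<in>{h::('x::finite \<times> 'y::finite) list. length h = n}. hist_prob sX sY h) = 1"
  using sum_hist_prob_take[where n = 0 and k = n and f = "\<lambda>_. 1"] by simp

lemma abs_sum_hist_prob_le:
  assumes "\<And>h. length h = n \<Longrightarrow> \<bar>f h\<bar> \<le> B"
  shows "\<bar>\<Sum>h\<in>{h::('x::finite \<times> 'y::finite) list. length h = n}. hist_prob sX sY h * f h\<bar> \<le> B"
  using convex_sum_bound_le[where a = f and b = 0, OF hist_prob_nonneg sum_hist_prob_eq_1] assms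
  by (simp add: mult.commute)

lemma stage_exp_eq:
  "stage_exp phi sX sY t = (\<Sum>h\<in>{h. length h = t}. hist_prob sX sY h *
      (\<Sum>x\<in>UNIV. \<Sum>y\<in>UNIV. pmf (sX h) x * pmf (sY h) y * phi (x, y)))"
  unfolding stage_exp_def sum_hist_prob_length_Suc by simp

lemma norm_suminf_minus_sum_le_geometric:
  fixes f :: "nat \<Rightarrow> 'a::banach"
  assumes "0 \<le> q" "q < 1" and f_le: "\<And>t. norm (f t) \<le> M * q ^ t"
  shows "norm (suminf f - (\<Sum>t<T. f t)) \<le> M * q ^ T / (1 - q)"
proof -
  have geometric: "summable (\<lambda>n. c * q ^ n)" for c
    using assms by (intro summable_mult summable_geometric) simp
  have "suminf f - (\<Sum>t<T. f t) = (\<Sum>n. f (n + T))"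
    using suminf_split_initial_segment[OF summable_comparison_test'[OF geometric f_le], of T]
    by (simp add: algebra_simps)
  also have "norm \<dots> \<le> (\<Sum>n. M * q ^ T * q ^ n)"
  proof (rule norm_suminf_le)
    show "norm (f (n + T)) \<le> M * q ^ T * q ^ n" for n
      using f_le[of "n + T"] by (simp add: power_add mult_ac)
  qed (rule geometric)
  also have "\<dots> = M * q ^ T / (1 - q)"
    using assms by (simp add: suminf_mult suminf_geometric)
  finally show ?thesis .
qed

definition pure_strategy :: "(nat \<Rightarrow> 'y) \<Rightarrow> ('x \<times> 'y) list \<Rightarrow> 'y pmf" where
  "pure_strategy ys h = return_pmf (ys (length h))"

text \<open>Only the first \<open>length zs\<close> entries of \<open>(!) zs\<close> influence the histories of length
  \<open>length zs\<close>, so the unspecified values of \<open>zs ! i\<close> for larger \<open>i\<close> do not matter.\<close>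

definition opp_cond_weight :: "(('x::finite \<times> 'y::finite) list \<Rightarrow> 'x pmf) \<Rightarrow> 'y list \<Rightarrow> 'x \<Rightarrow> real" where
  "opp_cond_weight sX zs x =
     (\<Sum>h\<in>{h. length h = length zs}. hist_prob sX (pure_strategy ((!) zs)) h * pmf (sX h) x)"

lemma opp_cond_weight_nonneg: "0 \<le> opp_cond_weight sX zs x"
  unfolding opp_cond_weight_def by (auto intro!: sum_nonneg simp: hist_prob_nonneg)

lemma sum_opp_cond_weight: "(\<Sum>x\<in>UNIV. opp_cond_weight sX zs x) = 1"
proof -
  have "(\<Sum>x\<in>UNIV. opp_cond_weight sX zs x)
      = (\<Sum>h\<in>{h. length h = length zs}. hist_prob sX (pure_strategy ((!) zs)) h * (\<Sum>x\<in>UNIV. pmf (sX h) x))"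
    unfolding opp_cond_weight_def by (simp add: sum.swap[of _ UNIV] sum_distrib_left)
  then show ?thesis by (simp add: sum_pmf_eq_1 sum_hist_prob_eq_1)
qed

definition opp_cond_of :: "(('x::finite \<times> 'y::finite) list \<Rightarrow> 'x pmf) \<Rightarrow> 'y list \<Rightarrow> 'x pmf" where
  "opp_cond_of sX zs = embed_pmf (opp_cond_weight sX zs)"

lemma pmf_opp_cond_of: "pmf (opp_cond_of sX zs) x = opp_cond_weight sX zs x"
  unfolding opp_cond_of_def
proof (rule pmf_embed_pmf)
  have "(\<integral>\<^sup>+ x. ennreal (opp_cond_weight sX zs x) \<partial>count_space UNIV) = ennreal (\<Sum>x\<in>UNIV. opp_cond_weight sX zs x)"
    by (simp add: nn_integral_count_space_finite opp_cond_weight_nonneg)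
  then show "(\<integral>\<^sup>+ x. ennreal (opp_cond_weight sX zs x) \<partial>count_space UNIV) = 1"
    by (simp add: sum_opp_cond_weight)
qed (rule opp_cond_weight_nonneg)

definition pure_stage_payoff :: "('x::finite \<times> 'y::finite \<Rightarrow> real) \<Rightarrow> (('x \<times> 'y) list \<Rightarrow> 'x pmf)
    \<Rightarrow> 'y list \<Rightarrow> 'y \<Rightarrow> real" where
  "pure_stage_payoff phi sX zs y = (\<Sum>x\<in>UNIV. pmf (opp_cond_of sX zs) x * phi (x, y))"

lemma abs_pure_stage_payoff_le: "\<bar>pure_stage_payoff phi sX zs y\<bar> \<le> (\<Sum>a\<in>UNIV. \<bar>phi a\<bar>)"
proof -
  have "\<bar>phi a\<bar> \<le> (\<Sum>a\<in>UNIV. \<bar>phi a\<bar>)" for a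
    by (rule member_le_sum) auto
  then show ?thesis
    using convex_sum_bound_le[where a = "\<lambda>x. phi (x, y)" and b = 0 and x = "pmf (opp_cond_of sX zs)" and I = UNIV]
    by (simp add: pure_stage_payoff_def sum_pmf_eq_1 mult.commute)
qed

lemma stage_exp_pure_strategy:
  "stage_exp phi sX (pure_strategy ys) t = pure_stage_payoff phi sX (map ys [0..<t]) (ys t)"
proof -
  let ?zs = "map ys [0..<t]"
  have "stage_exp phi sX (pure_strategy ys) t
      = (\<Sum>h\<in>{h. length h = t}. hist_prob sX (pure_strategy ys) h * (\<Sum>x\<in>UNIV. pmf (sX h) x * phi (x, ys t)))"
    unfolding stage_exp_eq sum_pmf_times_pmf by (simp add: pure_strategy_def indicator_def)
  also have "\<dots> = (\<Sum>h\<in>{h. length h = t}. hist_prob sX (pure_strategy ((!) ?zs)) h * (\<Sum>x\<in>UNIV. pmf (sX h) x * phi (x, ys t)))"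
    by (intro sum.cong refl arg_cong2[where f = times] hist_prob_cong) (simp add: pure_strategy_def)
  also have "\<dots> = pure_stage_payoff phi sX ?zs (ys t)"
    by (simp add: pure_stage_payoff_def pmf_opp_cond_of opp_cond_weight_def sum_distrib_left
        sum_distrib_right sum.swap[of _ UNIV] mult_ac)
  finally show ?thesis .
qed

lemma autocratic_pure_partial_sum_le:
  assumes "0 \<le> lam" "lam < 1" and "autocratic phi lam sX"
  shows "\<bar>\<Sum>t<length ys. lam ^ t * pure_stage_payoff phi sX (take t ys) (ys ! t)\<bar>
           \<le> (\<Sum>a\<in>UNIV. \<bar>phi a\<bar>) * lam ^ length ys / (1 - lam)"
proof -
  define f where "f = (\<lambda>t. lam ^ t * stage_exp phi sX (pure_strategy ((!) ys)) t)"
  have f_le: "norm (f t) \<le> (\<Sum>a\<in>UNIV. \<bar>phi a\<bar>) * lam ^ t" for t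
    using mult_left_mono[OF abs_pure_stage_payoff_le zero_le_power[OF assms(1)]] assms(1) by (simp add: f_def stage_exp_pure_strategy abs_mult mult.commute)
  have "(1 - lam) * suminf f = 0"
    using assms(3) unfolding autocratic_def disc_payoff_def f_def by blast
  then have "suminf f = 0"
    using assms(2) by simp
  moreover have "(\<Sum>t<length ys. f t) = (\<Sum>t<length ys. lam ^ t * pure_stage_payoff phi sX (take t ys) (ys ! t))"
  proof (intro sum.cong refl)
    fix t assume "t \<in> {..<length ys}"
    then have "map ((!) ys) [0..<t] = take t ys"
      by (intro nth_equalityI) auto
    then show "f t = lam ^ t * pure_stage_payoff phi sX (take t ys) (ys ! t)"
      by (simp add: f_def stage_exp_pure_strategy)
  qed
  ultimately show ?thesis
    using norm_suminf_minus_sum_le_geometric[OF assms(1,2) f_le, of "length ys"] by simp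
qed

lemma stage_exp_opp_cond_of:
  "stage_exp phi (opp_cond (opp_cond_of sX)) sY t
   = (\<Sum>h\<in>{h. length h = Suc t}. hist_prob (opp_cond (opp_cond_of sX)) sY h
        * pure_stage_payoff phi sX (take t (map snd h)) (map snd h ! t))"
proof -
  let ?sXt = "opp_cond (opp_cond_of sX)"
  have "stage_exp phi ?sXt sY t
      = (\<Sum>h\<in>{h. length h = t}. hist_prob ?sXt sY h *
           (\<Sum>y\<in>UNIV. pmf (sY h) y * pure_stage_payoff phi sX (map snd h) y))"
    by (simp add: stage_exp_eq sum_pmf_times_pmf opp_cond_def pure_stage_payoff_def)
  also have "\<dots> = (\<Sum>h\<in>{h. length h = t}. hist_prob ?sXt sY h *
           (\<Sum>x\<in>UNIV. \<Sum>y\<in>UNIV. pmf (?sXt h) x * pmf (sY h) y *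
              pure_stage_payoff phi sX (take t (map snd (h @ [(x, y)]))) (map snd (h @ [(x, y)]) ! t)))"
    by (intro sum.cong refl) (simp add: sum_pmf_times_pmf_snd nth_append)
  also have "\<dots> = (\<Sum>h\<in>{h. length h = Suc t}. hist_prob ?sXt sY h
        * pure_stage_payoff phi sX (take t (map snd h)) (map snd h ! t))"
    by (rule sum_hist_prob_length_Suc[symmetric])
  finally show ?thesis .
qed

lemma sum_stage_exp_opp_cond_of:
  "(\<Sum>t<T. lam ^ t * stage_exp phi (opp_cond (opp_cond_of sX)) sY t)
   = (\<Sum>h\<in>{h. length h = T}. hist_prob (opp_cond (opp_cond_of sX)) sY h *
        (\<Sum>t<T. lam ^ t * pure_stage_payoff phi sX (take t (map snd h)) (map snd h ! t)))"
proof -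
  let ?sXt = "opp_cond (opp_cond_of sX)"
  let ?payoff = "\<lambda>h t. pure_stage_payoff phi sX (take t (map snd h)) (map snd h ! t)"
  have "stage_exp phi ?sXt sY t = (\<Sum>h\<in>{h. length h = T}. hist_prob ?sXt sY h * ?payoff h t)"
    if "t < T" for t
  proof -
    have "(\<Sum>h\<in>{h. length h = T}. hist_prob ?sXt sY h * ?payoff h t)
        = (\<Sum>h\<in>{h. length h = Suc t + (T - Suc t)}. hist_prob ?sXt sY h * ?payoff (take (Suc t) h) t)"
      using that by (simp add: take_map)
    also have "\<dots> = (\<Sum>h\<in>{h. length h = Suc t}. hist_prob ?sXt sY h * ?payoff h t)"
      by (rule sum_hist_prob_take)
    finally show ?thesis
      by (simp add: stage_exp_opp_cond_of)
  qed
  then have "(\<Sum>t<T. lam ^ t * stage_exp phi ?sXt sY t)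
      = (\<Sum>t<T. \<Sum>h\<in>{h. length h = T}. lam ^ t * (hist_prob ?sXt sY h * ?payoff h t))"
    by (simp add: sum_distrib_left)
  also have "\<dots> = (\<Sum>h\<in>{h. length h = T}. hist_prob ?sXt sY h * (\<Sum>t<T. lam ^ t * ?payoff h t))"
    by (subst sum.swap) (simp add: sum_distrib_left mult_ac)
  finally show ?thesis .
qed

theorem proposition3:
  fixes phi :: "'x::finite \<times> 'y::finite \<Rightarrow> real" and lam :: real
    and sX :: "('x \<times> 'y) list \<Rightarrow> 'x pmf"
  assumes "0 \<le> lam" and "lam < 1" and "autocratic phi lam sX"
  shows "\<exists>sXt :: 'y list \<Rightarrow> 'x pmf. autocratic phi lam (opp_cond sXt)"
proof (intro exI[of _ "opp_cond_of sX"], unfold autocratic_def, intro allI)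
  fix sY :: "('x \<times> 'y) list \<Rightarrow> 'y pmf"
  let ?M = "\<Sum>a\<in>UNIV. \<bar>phi a\<bar>"
  let ?S = "\<lambda>T. \<Sum>t<T. lam ^ t * stage_exp phi (opp_cond (opp_cond_of sX)) sY t"
  have bound: "norm (?S T) \<le> ?M * lam ^ T / (1 - lam)" for T
    unfolding sum_stage_exp_opp_cond_of real_norm_def
  proof (intro abs_sum_hist_prob_le)
    fix h :: "('x \<times> 'y) list" assume "length h = T"
    then show "\<bar>\<Sum>t<T. lam ^ t * pure_stage_payoff phi sX (take t (map snd h)) (map snd h ! t)\<bar>
        \<le> ?M * lam ^ T / (1 - lam)"
      using autocratic_pure_partial_sum_le[OF assms, of "map snd h"] by simp
  qed
  have "(\<lambda>T. ?M * lam ^ T / (1 - lam)) \<longlonglongrightarrow> 0"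
    using assms(1,2) by (intro tendsto_divide_zero tendsto_mult_right_zero LIMSEQ_power_zero) simp
  then have "?S \<longlonglongrightarrow> 0"
    by (rule Lim_null_comparison[OF always_eventually[OF allI[OF bound]]])
  then have "(\<Sum>t. lam ^ t * stage_exp phi (opp_cond (opp_cond_of sX)) sY t) = 0"
    unfolding sums_def[symmetric] by (rule sums_unique[symmetric])
  then show "disc_payoff phi lam (opp_cond (opp_cond_of sX)) sY = 0"
    by (simp add: disc_payoff_def)
qed

end
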